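(* Let $(S,K,I)$ be a split graph and let $P=v_1\ldots v_n$, with $n\geq 2$, be an induced path in the factor graph $\Phi(S)$. Then $\max\{d_i: i\in[n]\}\in\{d_1,d_2,d_{n-1},d_n\}$. Moreover, if $\max\{d_i:i\in[n]\}=d_1$, then: (1) for each $i\geq 1$: $d_i\geq d_j$ and $N_i\supseteq N_j$ for all $j$ with $i+2\leq j\leq n$; (2) for each $i\geq 1$: $N_i\supseteq\bigcup_{j=i+2}^n N_j$; in particular $\bigcup_{i=1}^n N_i=N_1\cup N_2$; (3) $d_{2k}\geq d_{2k+2}$ and $d_{2k-1}\geq d_{2k+1}$ for all $k\geq 1$ (whenever the indices are at most $n$); (4) $\min\{d_i: i\in[n]\}\in\{d_{n-1},d_n\}$.
   Context: A split graph $(S,K,I)$ is a graph $S$ together with a fixed partition $V(S)=K\dot\cup I$, where $K$ is a clique and $I$ is an independent set. For a vertex $v_i$ of $S$, $N_i$ denotes its open neighborhood in $S$ and $d_i=|N_i|$ its degree in $S$; for $u,v$ write $\eta_{uv}=|N_u\cap N_v|$. The factor graph $\Phi(S)$ is the loopless multigraph with vertex set $I$ in which, for distinct $u,v\in I$, there is one edge joining $u$ and $v$ for each 2-switch of $S$ acting on $u$ and $v$ (a 2-switch replaces edges $ab,cd$ with $ac,bd$ when $ab,cd\in E(S)$ and $ac,bd\notin E(S)$); equivalently, the multiplicity of the edge $uv$ is $\sigma_{uv}=(d_u-\eta_{uv})(d_v-\eta_{uv})$, and $u,v$ are adjacent iff $\sigma_{uv}>0$. An induced path $v_1\ldots v_n$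 in $\Phi(S)$ consists of distinct vertices with consecutive ones adjacent and no other pair adjacent (multiplicities ignored for adjacency). *)

theory Defs
  imports Main
begin

definition split_graph :: "'a set \<Rightarrow> ('a \<Rightarrow> 'a \<Rightarrow> bool) \<Rightarrow> 'a set \<Rightarrow> 'a set \<Rightarrow> bool" where
  "split_graph V E K I \<longleftrightarrow>
     finite V \<and> (\<forall>u v. E u v \<longrightarrow> u \<in> V \<and> v \<in> V) \<and> (\<forall>u v. E u v \<longrightarrow> E v u) \<and>
     (\<forall>u. \<not> E u u) \<and> V = K \<union> I \<and> K \<inter> I = {} \<and>
     (\<forall>u\<in>K. \<forall>v\<in>K. u \<noteq> v \<longrightarrow> E u v) \<and> (\<forall>u\<in>I. \<forall>v\<in>I. \<not> E u v)"

definition nbhd :: "('a \<Rightarrow> 'a \<Rightarrow> bool) \<Rightarrow> 'a \<Rightarrow> 'a set" where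
  "nbhd E u = {w. E u w}"

definition deg :: "('a \<Rightarrow> 'a \<Rightarrow> bool) \<Rightarrow> 'a \<Rightarrow> nat" where
  "deg E u = card (nbhd E u)"

definition eta :: "('a \<Rightarrow> 'a \<Rightarrow> bool) \<Rightarrow> 'a \<Rightarrow> 'a \<Rightarrow> nat" where
  "eta E u v = card (nbhd E u \<inter> nbhd E v)"

text \<open>Multiplicity of the edge uv in the factor graph (number of 2-switches acting on u, v).\<close>
definition sigma :: "('a \<Rightarrow> 'a \<Rightarrow> bool) \<Rightarrow> 'a \<Rightarrow> 'a \<Rightarrow> nat" where
  "sigma E u v = (deg E u - eta E u v) * (deg E v - eta E u v)"

definition phi_adj :: "('a \<Rightarrow> 'a \<Rightarrow> bool) \<Rightarrow> 'a set \<Rightarrow> 'a \<Rightarrow> 'a \<Rightarrow> bool" where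
  "phi_adj E I u v \<longleftrightarrow> u \<in> I \<and> v \<in> I \<and> u \<noteq> v \<and> sigma E u v > 0"

definition induced_path_phi :: "('a \<Rightarrow> 'a \<Rightarrow> bool) \<Rightarrow> 'a set \<Rightarrow> (nat \<Rightarrow> 'a) \<Rightarrow> nat \<Rightarrow> bool" where
  "induced_path_phi E I v n \<longleftrightarrow>
     (\<forall>i\<in>{1..n}. v i \<in> I) \<and> inj_on v {1..n} \<and>
     (\<forall>i\<in>{1..n}. \<forall>j\<in>{1..n}. phi_adj E I (v i) (v j) \<longleftrightarrow> (j = i + 1 \<or> i = j + 1))"

end

theory Submission
  imports Defs
begin

text \<open>Since sigma u v = |N u - N v| * |N v - N u|, two vertices of I are adjacent in the
  factor graph exactly when their neighbourhoods are incomparable under inclusion. An induced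
  path v 1, ..., v n thus yields finite sets N 1, ..., N n of which exactly the consecutive ones
  are incomparable, and the theorem concerns such sequences alone. A set of maximum size
  contains every set comparable to it; at an interior position m this forces
  N (m + 2) \<subseteq> N (m - 1) and N (m - 2) \<subseteq> N (m + 1), leaving N (m - 1) and N (m + 1)
  incomparable. If N 1 is largest, then N 3 \<subseteq> N 1, and an inclusion N j \<subseteq> N i with
  j \<ge> i + 2 both extends to all later N k (N k is incomparable to N (k - 1) \<subseteq> N i) and
  shifts to N (i + 3) \<subseteq> N (i + 1) (N (i + 1) is not contained in N i).\<close>

lemma sigma_eq_card_Diff:
  assumes "finite (nbhd E u)" "finite (nbhd E w)"
  shows "sigma E u w = card (nbhd E u - nbhd E w) * card (nbhd E w - nbhd E u)"
  using assms by (simp add: sigma_def deg_def eta_def card_Diff_subset_Int Int_commute)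

lemma sigma_pos_iff_incomparable:
  assumes "finite (nbhd E u)" "finite (nbhd E w)"
  shows "0 < sigma E u w \<longleftrightarrow> \<not> nbhd E u \<subseteq> nbhd E w \<and> \<not> nbhd E w \<subseteq> nbhd E u"
  using assms by (simp add: sigma_eq_card_Diff card_gt_0_iff)

lemma split_graph_finite_nbhd:
  assumes "split_graph V E K I"
  shows "finite (nbhd E u)"
proof (rule finite_subset)
  show "nbhd E u \<subseteq> V" "finite V"
    using assms by (auto simp: split_graph_def nbhd_def)
qed

locale incomparability_path =
  fixes N :: "nat \<Rightarrow> 'a set" and n :: nat
  assumes comparable_iff_nonconsecutive:
    "i \<in> {1..n} \<Longrightarrow> j \<in> {1..n} \<Longrightarrow>
       (N i \<subseteq> N j \<or> N j \<subseteq> N i) \<longleftrightarrow> \<not> (j = i + 1 \<or> i = j + 1)"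
begin

lemma consecutive_incomparable:
  assumes "1 \<le> k" "Suc k \<le> n"
  shows "\<not> N k \<subseteq> N (Suc k)" "\<not> N (Suc k) \<subseteq> N k"
  using comparable_iff_nonconsecutive[of k "Suc k"] assms by auto

lemma nonconsecutive_comparable:
  assumes "i \<in> {1..n}" "j \<in> {1..n}" "j \<noteq> i + 1" "i \<noteq> j + 1"
  shows "N i \<subseteq> N j \<or> N j \<subseteq> N i"
  using comparable_iff_nonconsecutive assms by blast

lemma subset_extends:
  assumes "1 \<le> i" "i + 2 \<le> k" "Suc k \<le> n" "N k \<subseteq> N i"
  shows "N (Suc k) \<subseteq> N i"
proof -
  have "N i \<subseteq> N (Suc k) \<or> N (Suc k) \<subseteq> N i"
    using assms by (intro nonconsecutive_comparable) auto
  moreover have "\<not> N k \<subseteq> N (Suc k)"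
    using assms by (intro consecutive_incomparable) auto
  ultimately show ?thesis
    using assms(4) by blast
qed

lemma subset_extends_to_end:
  assumes "1 \<le> i" "i + 2 \<le> j" "N j \<subseteq> N i" "j \<le> k" "k \<le> n"
  shows "N k \<subseteq> N i"
  using assms(4,5)
proof (induction k rule: dec_induct)
  case base
  show ?case using assms(3) .
next
  case (step k)
  then show ?case
    using assms(1,2) by (intro subset_extends) auto
qed

lemma subset_shifts:
  assumes "1 \<le> i" "i + 3 \<le> n" "N (i + 3) \<subseteq> N i"
  shows "N (i + 3) \<subseteq> N (i + 1)"
proof -
  have "N (i + 1) \<subseteq> N (i + 3) \<or> N (i + 3) \<subseteq> N (i + 1)"
    using assms by (intro nonconsecutive_comparable) auto
  moreover have "\<not> N (Suc i) \<subseteq> N i"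
    using assms by (intro consecutive_incomparable) auto
  ultimately show ?thesis
    using assms(3) by auto
qed

end

locale finite_incomparability_path = incomparability_path +
  assumes finite_sets: "i \<in> {1..n} \<Longrightarrow> finite (N i)"
begin

abbreviation sizes :: "nat set" where
  "sizes \<equiv> (\<lambda>i. card (N i)) ` {1..n}"

lemma subset_if_card_le:
  assumes "i \<in> {1..n}" "j \<in> {1..n}" "j \<noteq> i + 1" "i \<noteq> j + 1" "card (N j) \<le> card (N i)"
  shows "N j \<subseteq> N i"
  using nonconsecutive_comparable[OF assms(1-4)] card_seteq[OF finite_sets[OF assms(2)]] assms(5)
  by blast

lemma interior_not_max:
  assumes "3 \<le> m" "m + 2 \<le> n"
  shows "\<exists>i\<in>{1..n}. card (N m) < card (N i)"
proof (rule ccontr)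
  obtain l where l: "m = l + 2" "1 \<le> l" "l + 4 \<le> n"
    using assms by (intro that[of "m - 2"]) auto
  assume "\<not> ?thesis"
  then have max: "card (N i) \<le> card (N (l + 2))" if "i \<in> {1..n}" for i
    using that l(1) by (simp add: not_less)
  have incomparable: "\<not> N (l + 1) \<subseteq> N (l + 2)" "\<not> N (l + 3) \<subseteq> N (l + 2)"
    "\<not> N (l + 4) \<subseteq> N (l + 3)" "\<not> N l \<subseteq> N (l + 1)"
    using l consecutive_incomparable[of "l + 1"] consecutive_incomparable[of "l + 2"]
      consecutive_incomparable[of "l + 3"] consecutive_incomparable[of l]
    by (simp_all add: numeral_eq_Suc)
  have "N l \<subseteq> N (l + 2)" "N (l + 4) \<subseteq> N (l + 2)"
    using l by (intro subset_if_card_le max; simp)+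
  moreover have "N (l + 1) \<subseteq> N (l + 4) \<or> N (l + 4) \<subseteq> N (l + 1)"
    "N l \<subseteq> N (l + 3) \<or> N (l + 3) \<subseteq> N l"
    using l by (intro nonconsecutive_comparable; simp)+
  ultimately have "N (l + 4) \<subseteq> N (l + 1)" "N l \<subseteq> N (l + 3)"
    using incomparable by blast+
  moreover have "N (l + 1) \<subseteq> N (l + 3) \<or> N (l + 3) \<subseteq> N (l + 1)"
    using l by (intro nonconsecutive_comparable) simp_all
  ultimately show False
    using incomparable(3,4) by blast
qed

lemma Max_sizes_at_end:
  assumes "1 \<le> n"
  shows "Max sizes \<in> {card (N 1), card (N 2), card (N (n - 1)), card (N n)}"
proof -
  have "Max sizes \<in> sizes"
    using assms by (intro Max_in) auto
  then obtain m where m: "m \<in> {1..n}" "Max sizes = card (N m)"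
    by auto
  have "\<not> (3 \<le> m \<and> m + 2 \<le> n)"
  proof
    assume "3 \<le> m \<and> m + 2 \<le> n"
    then obtain i where "i \<in> {1..n}" "card (N m) < card (N i)"
      using interior_not_max by blast
    then show False
      using m Max_ge[of sizes "card (N i)"] by auto
  qed
  then have "m = 1 \<or> m = 2 \<or> m = n - 1 \<or> m = n"
    using m(1) by auto
  then show ?thesis
    using m(2) by auto
qed

context
  assumes first_max: "Max sizes = card (N 1)"
begin

lemma card_le_first:
  assumes "i \<in> {1..n}"
  shows "card (N i) \<le> card (N 1)"
  using assms by (subst first_max [symmetric], intro Max_ge) auto

lemma second_successor_subset:
  assumes "1 \<le> i" "i + 2 \<le> n"
  shows "N (i + 2) \<subseteq> N i"
  using assms
proof (induction i rule: dec_induct)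
  case base
  then show ?case
    by (intro subset_if_card_le card_le_first) auto
next
  case (step i)
  have "N (i + 3) \<subseteq> N i"
    using step subset_extends_to_end[of i "i + 2" "i + 3"] by simp
  then have "N (i + 3) \<subseteq> N (i + 1)"
    using step by (intro subset_shifts) simp_all
  then show ?case
    by (simp add: numeral_eq_Suc)
qed

lemma nested_beyond_successor:
  assumes "1 \<le> i" "i + 2 \<le> j" "j \<le> n"
  shows "N j \<subseteq> N i"
proof (rule subset_extends_to_end[of i "i + 2"])
  show "N (i + 2) \<subseteq> N i"
    using assms by (intro second_successor_subset) auto
qed (use assms in auto)

lemma card_antimono_beyond_successor:
  assumes "1 \<le> i" "i + 2 \<le> j" "j \<le> n"
  shows "card (N j) \<le> card (N i)"
  using assms by (intro card_mono finite_sets nested_beyond_successor) auto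

lemma Union_eq_first_two:
  assumes "2 \<le> n"
  shows "(\<Union>i\<in>{1..n}. N i) = N 1 \<union> N 2"
proof
  show "(\<Union>i\<in>{1..n}. N i) \<subseteq> N 1 \<union> N 2"
  proof (rule UN_least)
    fix i assume "i \<in> {1..n}"
    then show "N i \<subseteq> N 1 \<union> N 2"
      using nested_beyond_successor[of 1 i] by (cases "i = 1 \<or> i = 2") auto
  qed
  show "N 1 \<union> N 2 \<subseteq> (\<Union>i\<in>{1..n}. N i)"
    using assms by force
qed

lemma Min_sizes_at_end:
  assumes "1 \<le> n"
  shows "Min sizes \<in> {card (N (n - 1)), card (N n)}"
proof -
  have "Min sizes \<in> sizes"
    using assms by (intro Min_in) auto
  then obtain m where m: "m \<in> {1..n}" "Min sizes = card (N m)"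
    by auto
  show ?thesis
  proof (cases "m + 2 \<le> n")
    case True
    then have "card (N n) \<le> Min sizes"
      using m card_antimono_beyond_successor by simp
    moreover have "Min sizes \<le> card (N n)"
      using assms by (intro Min_le) auto
    ultimately show ?thesis
      by simp
  next
    case False
    then have "m = n - 1 \<or> m = n"
      using m(1) by auto
    then show ?thesis
      using m(2) by auto
  qed
qed

end

end

lemma induced_path_phi_incomparability_path:
  assumes path: "induced_path_phi E I v n" and finite_nbhd: "\<And>u. finite (nbhd E u)"
  shows "finite_incomparability_path (\<lambda>i. nbhd E (v i)) n"
proof unfold_locales
  fix i j assume ij: "i \<in> {1..n}" "j \<in> {1..n}"
  show "(nbhd E (v i) \<subseteq> nbhd E (v j) \<or> nbhd E (v j) \<subseteq> nbhd E (v i))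
      \<longleftrightarrow> \<not> (j = i + 1 \<or> i = j + 1)"
  proof (cases "i = j")
    case False
    then have "v i \<in> I" "v j \<in> I" "v i \<noteq> v j"
      using path ij unfolding induced_path_phi_def inj_on_def by blast+
    then have "phi_adj E I (v i) (v j) \<longleftrightarrow>
        \<not> nbhd E (v i) \<subseteq> nbhd E (v j) \<and> \<not> nbhd E (v j) \<subseteq> nbhd E (v i)"
      by (simp add: phi_adj_def sigma_pos_iff_incomparable[OF finite_nbhd finite_nbhd])
    moreover have "phi_adj E I (v i) (v j) \<longleftrightarrow> (j = i + 1 \<or> i = j + 1)"
      using path ij unfolding induced_path_phi_def by blast
    ultimately show ?thesis
      by blast
  qed simp
qed (rule finite_nbhd)

theorem theorem2p4:
  fixes V K I :: "'a set" and E :: "'a \<Rightarrow> 'a \<Rightarrow> bool" and v :: "nat \<Rightarrow> 'a" and n :: nat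
  assumes "split_graph V E K I"
    and "n \<ge> 2"
    and "induced_path_phi E I v n"
  shows "Max ((\<lambda>i. deg E (v i)) ` {1..n}) \<in> {deg E (v 1), deg E (v 2), deg E (v (n - 1)), deg E (v n)}
     \<and> (Max ((\<lambda>i. deg E (v i)) ` {1..n}) = deg E (v 1) \<longrightarrow>
          (\<forall>i j. 1 \<le> i \<and> i + 2 \<le> j \<and> j \<le> n \<longrightarrow>
               deg E (v i) \<ge> deg E (v j) \<and> nbhd E (v j) \<subseteq> nbhd E (v i))
        \<and> (\<forall>i. 1 \<le> i \<and> i \<le> n \<longrightarrow> (\<Union>j\<in>{i+2..n}. nbhd E (v j)) \<subseteq> nbhd E (v i))
        \<and> (\<Union>i\<in>{1..n}. nbhd E (v i)) = nbhd E (v 1) \<union> nbhd E (v 2)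
        \<and> (\<forall>k\<ge>1. 2*k + 2 \<le> n \<longrightarrow> deg E (v (2*k)) \<ge> deg E (v (2*k + 2)))
        \<and> (\<forall>k\<ge>1. 2*k + 1 \<le> n \<longrightarrow> deg E (v (2*k - 1)) \<ge> deg E (v (2*k + 1)))
        \<and> Min ((\<lambda>i. deg E (v i)) ` {1..n}) \<in> {deg E (v (n - 1)), deg E (v n)})"
proof -
  interpret finite_incomparability_path "\<lambda>i. nbhd E (v i)" n
    using assms(3) split_graph_finite_nbhd[OF assms(1)]
    by (rule induced_path_phi_incomparability_path)
  have n: "1 \<le> n" "2 \<le> n"
    using assms(2) by simp_all
  show ?thesis
    unfolding deg_def
  proof (intro conjI impI Max_sizes_at_end[OF n(1)])
    assume first_max: "Max sizes = card (nbhd E (v 1))"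
    note nested = nested_beyond_successor[OF first_max]
      and card_antimono = card_antimono_beyond_successor[OF first_max]
    show "\<forall>i j. 1 \<le> i \<and> i + 2 \<le> j \<and> j \<le> n \<longrightarrow>
        card (nbhd E (v j)) \<le> card (nbhd E (v i)) \<and> nbhd E (v j) \<subseteq> nbhd E (v i)"
      using nested card_antimono by blast
    show "\<forall>i. 1 \<le> i \<and> i \<le> n \<longrightarrow> (\<Union>j\<in>{i+2..n}. nbhd E (v j)) \<subseteq> nbhd E (v i)"
      using nested by fastforce
    show "(\<Union>i\<in>{1..n}. nbhd E (v i)) = nbhd E (v 1) \<union> nbhd E (v 2)"
      using Union_eq_first_two[OF first_max n(2)] .
    show "\<forall>k\<ge>1. 2*k + 2 \<le> n \<longrightarrow> card (nbhd E (v (2*k + 2))) \<le> card (nbhd E (v (2*k)))"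
      using card_antimono by simp
    show "\<forall>k\<ge>1. 2*k + 1 \<le> n \<longrightarrow> card (nbhd E (v (2*k + 1))) \<le> card (nbhd E (v (2*k - 1)))"
      using card_antimono by simp
    show "Min sizes \<in> {card (nbhd E (v (n - 1))), card (nbhd E (v n))}"
      using Min_sizes_at_end[OF first_max n(1)] .
  qed
qed

end
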